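(* Let $X\subseteq \mathbb{P}^1\times\mathbb{P}^1\times\mathbb{P}^1$ be a variety of lines such that, for each $h=1,2,3$, $U_h(X)$ resembles a Ferrers diagram. Then $X$ has the $Hyp_5(\star)$-property if and only if for all $a_1,a_2\in[d_1]$, $b_1,b_2\in[d_2]$, $c_1,c_2\in[d_3]$ the following three conditions hold: (1) either $\left(\begin{array}{cc}\mu_{a_1b_1c_1} & \mu_{a_1b_2c_1}\\ \mu_{a_2b_1c_1} & \mu_{a_2b_2c_1}\end{array}\right)\neq\left(\begin{array}{cc}2&1\\2&2\end{array}\right)$ or $\left(\begin{array}{cc}\mu_{a_1b_10} & \mu_{a_1b_20}\\ \mu_{a_2b_10} & \mu_{a_2b_20}\end{array}\right)\neq\left(\begin{array}{cc}1&1\\0&1\end{array}\right)$; (2) either $\left(\begin{array}{cc}\mu_{a_1b_1c_1} & \mu_{a_1b_1c_2}\\ \mu_{a_2b_1c_1} & \mu_{a_2b_1c_2}\end{array}\right)\neq\left(\begin{array}{cc}2&1\\2&2\end{array}\right)$ or $\left(\begin{array}{cc}\mu_{a_10c_1} & \mu_{a_10c_2}\\ \mu_{a_20c_1} & \mu_{a_20c_2}\end{array}\right)\neq\left(\begin{array}{cc}1&1\\0&1\end{array}\right)$; (3) either $\left(\begin{array}{cc}\mu_{a_1b_1c_1} & \mu_{a_1b_1c_2}\\ \mu_{a_1b_2c_1} & \mu_{a_1b_2c_2}\end{array}\right)\neq\left(\begin{array}{cc}2&1\\2&2\end{array}\right)$ or $\left(\begin{array}{cc}\mu_{0b_1c_1}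 & \mu_{0b_1c_2}\\ \mu_{0b_2c_1} & \mu_{0b_2c_2}\end{array}\right)\neq\left(\begin{array}{cc}1&1\\0&1\end{array}\right)$.
   Context: $R=K[x_{1,0},x_{1,1},x_{2,0},x_{2,1},x_{3,0},x_{3,1}]$ ($K$ algebraically closed, characteristic zero) trigraded by $\deg x_{i,j}=\mathbf e_i$, coordinate ring of $\mathbb{P}^1\times\mathbb{P}^1\times\mathbb{P}^1$. A variety of lines is written $X= \bigcup_{(i,j)\in U_3(X)} \mathcal{L}(A_i,B_j)\cup\bigcup_{(i,k)\in U_2(X)} \mathcal{L}(A_i,C_k)\cup \bigcup_{(j,k)\in U_1(X)} \mathcal{L}(B_j,C_k)$, where $\mathcal L(A_1),\ldots,\mathcal L(A_{d_1})$, $\mathcal L(B_1),\ldots,\mathcal L(B_{d_2})$, $\mathcal L(C_1),\ldots,\mathcal L(C_{d_3})$ are the distinct hyperplanes containing some line of $X$, defined by linear forms of degrees $(1,0,0),(0,1,0),(0,0,1)$ respectively, $\mathcal L(F,G)$ is the line defined by $(F,G)$, $U_3(X)\subseteq[d_1]\times[d_2]$, $U_2(X)\subseteq[d_1]\times[d_3]$, $U_1(X)\subseteq[d_2]\times[d_3]$, $[n]=\{1,\dots,n\}$. $U_h(X)$ resembles a Ferrers diagram if after permuting each of its two index sets it becomes a set $U$ with: $(u,v)\in U\Rightarrow (u',v')\in U$ for all $1\le u'\le u$, $1\le v'\le v$. For $P_{ijk}=\mathcal L(A_i)\cap\mathcal L(B_j)\cap\mathcal L(C_k)$, $\mu_{ijk}$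 is the number of lines of $X$ through $P_{ijk}$. Moreover $\mu_{ij0}=1$ if $\mathcal L(A_i,B_j)\in X$ and $0$ otherwise; $\mu_{i0k}=1$ if $\mathcal L(A_i,C_k)\in X$ and $0$ otherwise; $\mu_{0jk}=1$ if $\mathcal L(B_j,C_k)\in X$ and $0$ otherwise. $X$ has the $Hyp_5(\star)$-property if for any $5$ hyperplanes $H_1,\ldots,H_5$ (each defined by a linear form of degree some $\mathbf e_i$) such that $\mathcal{L}(H_i,H_j)$ is a line of $X$ for all $j\neq i-1,i,i+1$ (indices modulo $5$), there is $u$ with $\mathcal{L}(H_u,H_{u+1})$ a line of $X$. *)

theory Defs
  imports "HOL-Computational_Algebra.Polynomial"
begin

text \<open>Points of the projective line P^1 over K are modelled as K option
  (Some a = [a:1], None = the point at infinity [1:0]).  A hyperplane defined by a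
  linear form of degree e_t (t in {1,2,3}) is, up to scalar, determined by
  t and the unique point of the t-th factor P^1 where the form vanishes; we
  represent it by the pair (t, p).\<close>

type_synonym 'k pt3 = "'k option \<times> 'k option \<times> 'k option"
type_synonym 'k hyperplane = "nat \<times> 'k option"

definition coord :: "nat \<Rightarrow> 'k pt3 \<Rightarrow> 'k option" where
  "coord t x = (if t = 1 then fst x else if t = 2 then fst (snd x) else snd (snd x))"

definition is_hyperplane :: "'k hyperplane \<Rightarrow> bool" where
  "is_hyperplane H \<longleftrightarrow> fst H \<in> {1,2,3}"

definition hyp :: "'k hyperplane \<Rightarrow> 'k pt3 set" where
  "hyp H = {x. coord (fst H) x = snd H}"

definition Lin :: "'k hyperplane \<Rightarrow> 'k hyperplane \<Rightarrow> 'k pt3 set" where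
  "Lin F G = hyp F \<inter> hyp G"

definition lines_of ::
  "(nat \<Rightarrow> 'k option) \<Rightarrow> (nat \<Rightarrow> 'k option) \<Rightarrow> (nat \<Rightarrow> 'k option)
   \<Rightarrow> (nat \<times> nat) set \<Rightarrow> (nat \<times> nat) set \<Rightarrow> (nat \<times> nat) set \<Rightarrow> 'k pt3 set set" where
  "lines_of A B C U3 U2 U1 =
     {Lin (1, A i) (2, B j) | i j. (i, j) \<in> U3} \<union>
     {Lin (1, A i) (3, C k) | i k. (i, k) \<in> U2} \<union>
     {Lin (2, B j) (3, C k) | j k. (j, k) \<in> U1}"

definition line_in :: "'k pt3 set set \<Rightarrow> 'k hyperplane \<Rightarrow> 'k hyperplane \<Rightarrow> bool" where
  "line_in X F G \<longleftrightarrow> fst F \<noteq> fst G \<and> Lin F G \<in> X"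

definition Hyp5_star :: "'k pt3 set set \<Rightarrow> bool" where
  "Hyp5_star X \<longleftrightarrow>
     (\<forall>H :: nat \<Rightarrow> 'k hyperplane.
        (\<forall>i<5. is_hyperplane (H i)) \<and>
        (\<forall>i<5. \<forall>j<5. j \<noteq> (i + 4) mod 5 \<and> j \<noteq> i \<and> j \<noteq> (i + 1) mod 5
              \<longrightarrow> line_in X (H i) (H j))
        \<longrightarrow> (\<exists>u<5. line_in X (H u) (H ((u + 1) mod 5))))"

definition resembles_ferrers :: "(nat \<times> nat) set \<Rightarrow> nat \<Rightarrow> nat \<Rightarrow> bool" where
  "resembles_ferrers U m n \<longleftrightarrow>
     (\<exists>\<sigma> \<tau>. bij_betw \<sigma> {1..m} {1..m} \<and> bij_betw \<tau> {1..n} {1..n} \<and>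
        (let V = (\<lambda>(u, v). (\<sigma> u, \<tau> v)) ` U in
          \<forall>u v u' v'. (u, v) \<in> V \<and> 1 \<le> u' \<and> u' \<le> u \<and> 1 \<le> v' \<and> v' \<le> v \<longrightarrow> (u', v') \<in> V))"

definition mu :: "'k pt3 set set \<Rightarrow> (nat \<Rightarrow> 'k option) \<Rightarrow> (nat \<Rightarrow> 'k option) \<Rightarrow> (nat \<Rightarrow> 'k option)
   \<Rightarrow> nat \<Rightarrow> nat \<Rightarrow> nat \<Rightarrow> nat" where
  "mu X A B C i j k = card {L \<in> X. (A i, B j, C k) \<in> L}"

definition mu_AB :: "'k pt3 set set \<Rightarrow> (nat \<Rightarrow> 'k option) \<Rightarrow> (nat \<Rightarrow> 'k option) \<Rightarrow> nat \<Rightarrow> nat \<Rightarrow> nat" where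
  "mu_AB X A B i j = (if Lin (1, A i) (2, B j) \<in> X then 1 else 0)"

definition mu_AC :: "'k pt3 set set \<Rightarrow> (nat \<Rightarrow> 'k option) \<Rightarrow> (nat \<Rightarrow> 'k option) \<Rightarrow> nat \<Rightarrow> nat \<Rightarrow> nat" where
  "mu_AC X A C i k = (if Lin (1, A i) (3, C k) \<in> X then 1 else 0)"

definition mu_BC :: "'k pt3 set set \<Rightarrow> (nat \<Rightarrow> 'k option) \<Rightarrow> (nat \<Rightarrow> 'k option) \<Rightarrow> nat \<Rightarrow> nat \<Rightarrow> nat" where
  "mu_BC X B C j k = (if Lin (2, B j) (3, C k) \<in> X then 1 else 0)"

end

(*
  X fails Hyp5(star) exactly when five hyperplanes form an induced pentagon in the graph whose
  edges are the lines of X.  Adjacent vertices of the pentagon are hyperplanes of different types,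
  so after a rotation and a reflection the types read (t0, t1, t2, t1, t2) with t1 < t2; this
  leaves one shape of pentagon for each pair {t1, t2}.  The number mu_ijk counts which of the
  three lines L(A_i,B_j), L(A_i,C_k), L(B_j,C_k) through P_ijk lie in X, so each pair of 2x2
  patterns in the statement says exactly that the edges of one such pentagon are present and its
  chords are absent.
*)

theory Submission
  imports Defs
begin

lemma all_less_five: "(\<forall>i<5. P i) \<longleftrightarrow> P 0 \<and> P 1 \<and> P 2 \<and> P 3 \<and> P (4::nat)"
  by (auto simp: less_Suc_eq eval_nat_numeral)

lemma ex_less_five: "(\<exists>i<5. P i) \<longleftrightarrow> P 0 \<or> P 1 \<or> P 2 \<or> P 3 \<or> P (4::nat)"
  by (auto simp: less_Suc_eq eval_nat_numeral)

(* Keeps the hyperplane type 1 from being rewritten to Suc 0, which would defeat the lemmas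
   about Lin (1, _) _ below. *)
declare One_nat_def [simp del]

lemma mem_Lin: "x \<in> Lin (s, p) (t, q) \<longleftrightarrow> coord s x = p \<and> coord t x = q"
  by (simp add: Lin_def hyp_def)

lemma Lin_commute: "Lin F G = Lin G F"
  by (auto simp: Lin_def)

lemma Lin_12_eq_iff: "Lin (1, p) (2, q) = Lin (1, p') (2, q') \<longleftrightarrow> p = p' \<and> q = q'"
proof
  assume "Lin (1, p) (2, q) = Lin (1, p') (2, q')"
  moreover have "(p, q, None) \<in> Lin (1, p) (2, q)" by (simp add: mem_Lin coord_def)
  ultimately show "p = p' \<and> q = q'" by (simp add: mem_Lin coord_def)
qed simp

lemma Lin_13_eq_iff: "Lin (1, p) (3, r) = Lin (1, p') (3, r') \<longleftrightarrow> p = p' \<and> r = r'"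
proof
  assume "Lin (1, p) (3, r) = Lin (1, p') (3, r')"
  moreover have "(p, None, r) \<in> Lin (1, p) (3, r)" by (simp add: mem_Lin coord_def)
  ultimately show "p = p' \<and> r = r'" by (simp add: mem_Lin coord_def)
qed simp

lemma Lin_23_eq_iff: "Lin (2, q) (3, r) = Lin (2, q') (3, r') \<longleftrightarrow> q = q' \<and> r = r'"
proof
  assume "Lin (2, q) (3, r) = Lin (2, q') (3, r')"
  moreover have "(None, q, r) \<in> Lin (2, q) (3, r)" by (simp add: mem_Lin coord_def)
  ultimately show "q = q' \<and> r = r'" by (simp add: mem_Lin coord_def)
qed simp

text \<open>Lines of different kinds differ: the first line is free in a coordinate that the second
  one fixes.\<close>

lemma Lin_12_neq_Lin_13: "Lin (1, p) (2, q) \<noteq> Lin (1, p') (3, r)"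
proof
  assume eq: "Lin (1, p) (2, q) = Lin (1, p') (3, r)"
  have "(p, q, None) \<in> Lin (1, p) (2, q)" "(p, q, Some c) \<in> Lin (1, p) (2, q)" for c
    by (simp_all add: mem_Lin coord_def)
  then show False unfolding eq by (simp add: mem_Lin coord_def)
qed

lemma Lin_12_neq_Lin_23: "Lin (1, p) (2, q) \<noteq> Lin (2, q') (3, r)"
proof
  assume eq: "Lin (1, p) (2, q) = Lin (2, q') (3, r)"
  have "(p, q, None) \<in> Lin (1, p) (2, q)" "(p, q, Some c) \<in> Lin (1, p) (2, q)" for c
    by (simp_all add: mem_Lin coord_def)
  then show False unfolding eq by (simp add: mem_Lin coord_def)
qed

lemma Lin_13_neq_Lin_23: "Lin (1, p) (3, r) \<noteq> Lin (2, q) (3, r')"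
proof
  assume eq: "Lin (1, p) (3, r) = Lin (2, q) (3, r')"
  have "(p, None, r) \<in> Lin (1, p) (3, r)" "(p, Some c, r) \<in> Lin (1, p) (3, r)" for c
    by (simp_all add: mem_Lin coord_def)
  then show False unfolding eq by (simp add: mem_Lin coord_def)
qed

lemmas Lin_neq = Lin_12_neq_Lin_13 Lin_12_neq_Lin_23 Lin_13_neq_Lin_23
  Lin_12_neq_Lin_13[symmetric] Lin_12_neq_Lin_23[symmetric] Lin_13_neq_Lin_23[symmetric]

lemma line_in_commute: "line_in X F G \<longleftrightarrow> line_in X G F"
  unfolding line_in_def by (metis Lin_commute)

definition induced_pentagon ::
  "'k pt3 set set \<Rightarrow> 'k hyperplane \<Rightarrow> 'k hyperplane \<Rightarrow> 'k hyperplane \<Rightarrow> 'k hyperplane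
   \<Rightarrow> 'k hyperplane \<Rightarrow> bool" where
  "induced_pentagon X v0 v1 v2 v3 v4 \<longleftrightarrow>
     (\<forall>v\<in>{v0, v1, v2, v3, v4}. is_hyperplane v) \<and>
     line_in X v0 v1 \<and> line_in X v1 v2 \<and> line_in X v2 v3 \<and> line_in X v3 v4 \<and> line_in X v4 v0 \<and>
     \<not> line_in X v0 v2 \<and> \<not> line_in X v1 v3 \<and> \<not> line_in X v2 v4 \<and> \<not> line_in X v3 v0 \<and>
     \<not> line_in X v4 v1"

text \<open>In the Hyp5 configuration the lines of X join exactly the non-consecutive hyperplanes, so
  they form the pentagon H_0 H_2 H_4 H_1 H_3.\<close>

lemma not_Hyp5_star_iff_induced_pentagon:
  "\<not> Hyp5_star X \<longleftrightarrow> (\<exists>v0 v1 v2 v3 v4. induced_pentagon X v0 v1 v2 v3 v4)"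
proof
  assume "\<not> Hyp5_star X"
  then obtain H :: "nat \<Rightarrow> 'a hyperplane" where "((\<forall>i<5. is_hyperplane (H i)) \<and>
      (\<forall>i<5. \<forall>j<5. j \<noteq> (i + 4) mod 5 \<and> j \<noteq> i \<and> j \<noteq> (i + 1) mod 5 \<longrightarrow> line_in X (H i) (H j))) \<and>
      \<not> (\<exists>u<5. line_in X (H u) (H ((u + 1) mod 5)))"
    unfolding Hyp5_star_def not_all not_imp ..
  then have "induced_pentagon X (H 0) (H 2) (H 4) (H 1) (H 3)"
    by (simp add: induced_pentagon_def all_less_five ex_less_five line_in_commute)
  then show "\<exists>v0 v1 v2 v3 v4. induced_pentagon X v0 v1 v2 v3 v4" by blast
next
  assume "\<exists>v0 v1 v2 v3 v4. induced_pentagon X v0 v1 v2 v3 v4"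
  then obtain v0 v1 v2 v3 v4 where "induced_pentagon X v0 v1 v2 v3 v4" by blast
  then show "\<not> Hyp5_star X"
    unfolding Hyp5_star_def not_all
    by (intro exI[of _ "(!) [v0, v3, v1, v4, v2]"])
      (simp add: induced_pentagon_def all_less_five ex_less_five line_in_commute)
qed

lemma line_in_fst_neq: "line_in X F G \<Longrightarrow> fst F \<noteq> fst G"
  by (simp add: line_in_def)

lemma not_line_in_same_type: "\<not> line_in X (t, p) (t, q)"
  by (simp add: line_in_def)

lemma induced_pentagon_rotate:
  "induced_pentagon X v0 v1 v2 v3 v4 \<Longrightarrow> induced_pentagon X v1 v2 v3 v4 v0"
  by (auto simp: induced_pentagon_def)

lemma induced_pentagon_reflect:
  "induced_pentagon X v0 v1 v2 v3 v4 \<Longrightarrow> induced_pentagon X v0 v4 v3 v2 v1"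
  by (auto simp: induced_pentagon_def line_in_commute)

lemma pentagon_colouring_alternates:
  assumes "{t0, t1, t2, t3, t4} \<subseteq> {x, y, z}"
    and "t0 \<noteq> t1" "t1 \<noteq> t2" "t2 \<noteq> t3" "t3 \<noteq> t4" "t4 \<noteq> t0"
  shows "t1 = t3 \<and> t2 = t4 \<or> t2 = t4 \<and> t3 = t0 \<or> t3 = t0 \<and> t4 = t1 \<or> t4 = t1 \<and> t0 = t2 \<or>
    t0 = t2 \<and> t1 = t3"
  using assms by auto

lemma induced_pentagon_normal_form:
  assumes "induced_pentagon X v0 v1 v2 v3 v4"
  obtains w0 w1 w2 w3 w4 where "induced_pentagon X w0 w1 w2 w3 w4"
    and "fst w1 = fst w3" and "fst w2 = fst w4" and "fst w1 < fst w2"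
proof -
  have rotations: "induced_pentagon X v1 v2 v3 v4 v0" "induced_pentagon X v2 v3 v4 v0 v1"
    "induced_pentagon X v3 v4 v0 v1 v2" "induced_pentagon X v4 v0 v1 v2 v3"
    using assms by (meson induced_pentagon_rotate)+
  have "{fst v0, fst v1, fst v2, fst v3, fst v4} \<subseteq> {1, 2, 3}"
    using assms by (simp add: induced_pentagon_def is_hyperplane_def)
  moreover have "fst v0 \<noteq> fst v1" "fst v1 \<noteq> fst v2" "fst v2 \<noteq> fst v3" "fst v3 \<noteq> fst v4"
    "fst v4 \<noteq> fst v0"
    using assms by (auto simp: induced_pentagon_def dest: line_in_fst_neq)
  ultimately have "fst v1 = fst v3 \<and> fst v2 = fst v4 \<or> fst v2 = fst v4 \<and> fst v3 = fst v0 \<or>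
      fst v3 = fst v0 \<and> fst v4 = fst v1 \<or> fst v4 = fst v1 \<and> fst v0 = fst v2 \<or>
      fst v0 = fst v2 \<and> fst v1 = fst v3"
    by (rule pentagon_colouring_alternates)
  then obtain u0 u1 u2 u3 u4 where u: "induced_pentagon X u0 u1 u2 u3 u4"
    and "fst u1 = fst u3" "fst u2 = fst u4"
    using assms rotations by blast
  moreover have "fst u1 \<noteq> fst u2"
    using u by (auto simp: induced_pentagon_def dest: line_in_fst_neq)
  ultimately show thesis
    using that induced_pentagon_reflect[OF u] by (metis linorder_neqE_nat)
qed

locale variety_of_lines =
  fixes A B C :: "nat \<Rightarrow> 'k option" and d1 d2 d3 :: nat
    and U3 U2 U1 :: "(nat \<times> nat) set" and X :: "'k pt3 set set"
  assumes X_def: "X = lines_of A B C U3 U2 U1"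
    and inj_A: "inj_on A {1..d1}" and inj_B: "inj_on B {1..d2}" and inj_C: "inj_on C {1..d3}"
    and U3_sub: "U3 \<subseteq> {1..d1} \<times> {1..d2}"
    and U2_sub: "U2 \<subseteq> {1..d1} \<times> {1..d3}"
    and U1_sub: "U1 \<subseteq> {1..d2} \<times> {1..d3}"
begin

definition hyperplanes :: "'k hyperplane set" where
  "hyperplanes = (\<lambda>a. (1, A a)) ` {1..d1} \<union> (\<lambda>b. (2, B b)) ` {1..d2} \<union> (\<lambda>c. (3, C c)) ` {1..d3}"

lemma Lin_12_in_X_iff: "Lin (1, p) (2, q) \<in> X \<longleftrightarrow> (\<exists>(a, b)\<in>U3. p = A a \<and> q = B b)"
  by (auto simp: X_def lines_of_def Lin_12_eq_iff Lin_neq)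

lemma Lin_13_in_X_iff: "Lin (1, p) (3, r) \<in> X \<longleftrightarrow> (\<exists>(a, c)\<in>U2. p = A a \<and> r = C c)"
  by (auto simp: X_def lines_of_def Lin_13_eq_iff Lin_neq)

lemma Lin_23_in_X_iff: "Lin (2, q) (3, r) \<in> X \<longleftrightarrow> (\<exists>(b, c)\<in>U1. q = B b \<and> r = C c)"
  by (auto simp: X_def lines_of_def Lin_23_eq_iff Lin_neq)

lemma Lin_A_B_in_X_iff:
  "a \<in> {1..d1} \<Longrightarrow> b \<in> {1..d2} \<Longrightarrow> Lin (1, A a) (2, B b) \<in> X \<longleftrightarrow> (a, b) \<in> U3"
  using U3_sub by (auto simp: Lin_12_in_X_iff inj_on_eq_iff[OF inj_A] inj_on_eq_iff[OF inj_B])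

lemma Lin_A_C_in_X_iff:
  "a \<in> {1..d1} \<Longrightarrow> c \<in> {1..d3} \<Longrightarrow> Lin (1, A a) (3, C c) \<in> X \<longleftrightarrow> (a, c) \<in> U2"
  using U2_sub by (auto simp: Lin_13_in_X_iff inj_on_eq_iff[OF inj_A] inj_on_eq_iff[OF inj_C])

lemma Lin_B_C_in_X_iff:
  "b \<in> {1..d2} \<Longrightarrow> c \<in> {1..d3} \<Longrightarrow> Lin (2, B b) (3, C c) \<in> X \<longleftrightarrow> (b, c) \<in> U1"
  using U1_sub by (auto simp: Lin_23_in_X_iff inj_on_eq_iff[OF inj_B] inj_on_eq_iff[OF inj_C])

lemma line_in_indexed_iff:
  assumes "a \<in> {1..d1}" "b \<in> {1..d2}" "c \<in> {1..d3}"
  shows "line_in X (1, A a) (2, B b) \<longleftrightarrow> (a, b) \<in> U3" "line_in X (2, B b) (1, A a) \<longleftrightarrow> (a, b) \<in> U3"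
    and "line_in X (1, A a) (3, C c) \<longleftrightarrow> (a, c) \<in> U2" "line_in X (3, C c) (1, A a) \<longleftrightarrow> (a, c) \<in> U2"
    and "line_in X (2, B b) (3, C c) \<longleftrightarrow> (b, c) \<in> U1" "line_in X (3, C c) (2, B b) \<longleftrightarrow> (b, c) \<in> U1"
  using assms Lin_A_B_in_X_iff Lin_A_C_in_X_iff Lin_B_C_in_X_iff
  by (simp_all add: line_in_def Lin_commute[of "(2, B b)" "(1, A a)"]
      Lin_commute[of "(3, C c)" "(1, A a)"] Lin_commute[of "(3, C c)" "(2, B b)"])

lemma line_in_hyperplanes:
  assumes "line_in X F G" and "is_hyperplane F" and "is_hyperplane G"
  shows "F \<in> hyperplanes"
proof -
  have both: "(s, p) \<in> hyperplanes \<and> (t, q) \<in> hyperplanes"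
    if "line_in X (s, p) (t, q)" "s < t" "s \<in> {1, 2, 3}" "t \<in> {1, 2, 3}" for s t p q
  proof -
    from that have "s = 1 \<and> t = 2 \<or> s = 1 \<and> t = 3 \<or> s = 2 \<and> t = 3" by auto
    then show ?thesis
      using that(1)
      by (auto simp: hyperplanes_def line_in_def Lin_12_in_X_iff Lin_13_in_X_iff Lin_23_in_X_iff
          dest!: subsetD[OF U3_sub] subsetD[OF U2_sub] subsetD[OF U1_sub])
  qed
  have "fst F \<noteq> fst G" using assms(1) by (rule line_in_fst_neq)
  then show ?thesis
    using both[of "fst F" "snd F" "fst G" "snd G"] both[of "fst G" "snd G" "fst F" "snd F"] assms
    by (auto simp: is_hyperplane_def line_in_commute[of X G] dest: linorder_neqE_nat)
qed

lemma induced_pentagon_vertices: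
  assumes "induced_pentagon X v0 v1 v2 v3 v4"
  shows "{v0, v1, v2, v3, v4} \<subseteq> hyperplanes"
  using assms unfolding induced_pentagon_def by (blast intro: line_in_hyperplanes)

lemma induced_pentagon_indexed:
  assumes "induced_pentagon X v0 v1 v2 v3 v4"
  shows "(\<exists>a1\<in>{1..d1}. \<exists>a2\<in>{1..d1}. \<exists>b1\<in>{1..d2}. \<exists>b2\<in>{1..d2}. \<exists>c\<in>{1..d3}.
           induced_pentagon X (3, C c) (1, A a2) (2, B b2) (1, A a1) (2, B b1)) \<or>
         (\<exists>a1\<in>{1..d1}. \<exists>a2\<in>{1..d1}. \<exists>b\<in>{1..d2}. \<exists>c1\<in>{1..d3}. \<exists>c2\<in>{1..d3}.
           induced_pentagon X (2, B b) (1, A a2) (3, C c2) (1, A a1) (3, C c1)) \<or>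
         (\<exists>a\<in>{1..d1}. \<exists>b1\<in>{1..d2}. \<exists>b2\<in>{1..d2}. \<exists>c1\<in>{1..d3}. \<exists>c2\<in>{1..d3}.
           induced_pentagon X (1, A a) (2, B b2) (3, C c2) (2, B b1) (3, C c1))"
proof -
  obtain w0 w1 w2 w3 w4 where w: "induced_pentagon X w0 w1 w2 w3 w4"
    and "fst w1 = fst w3" "fst w2 = fst w4" "fst w1 < fst w2"
    using assms by (rule induced_pentagon_normal_form)
  moreover have "{w0, w1, w2, w3, w4} \<subseteq> hyperplanes"
    using w by (rule induced_pentagon_vertices)
  moreover have "fst w0 \<noteq> fst w1" "fst w4 \<noteq> fst w0"
    using w by (auto simp: induced_pentagon_def dest: line_in_fst_neq)
  ultimately show ?thesis
    by (auto simp: hyperplanes_def)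
qed

lemma Hyp5_star_iff_no_indexed_pentagon:
  "Hyp5_star X \<longleftrightarrow>
    (\<forall>a1\<in>{1..d1}. \<forall>a2\<in>{1..d1}. \<forall>b1\<in>{1..d2}. \<forall>b2\<in>{1..d2}. \<forall>c1\<in>{1..d3}. \<forall>c2\<in>{1..d3}.
       \<not> induced_pentagon X (3, C c1) (1, A a2) (2, B b2) (1, A a1) (2, B b1) \<and>
       \<not> induced_pentagon X (2, B b1) (1, A a2) (3, C c2) (1, A a1) (3, C c1) \<and>
       \<not> induced_pentagon X (1, A a1) (2, B b2) (3, C c2) (2, B b1) (3, C c1))"
  (is "_ \<longleftrightarrow> ?no_pentagon")
proof
  assume "Hyp5_star X"
  then show ?no_pentagon
    using not_Hyp5_star_iff_induced_pentagon by blast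
next
  assume no_pentagon: ?no_pentagon
  show "Hyp5_star X"
  proof (rule ccontr)
    assume "\<not> Hyp5_star X"
    then obtain v0 v1 v2 v3 v4 where "induced_pentagon X v0 v1 v2 v3 v4"
      using not_Hyp5_star_iff_induced_pentagon by blast
    from induced_pentagon_indexed[OF this] show False
      using no_pentagon by blast
  qed
qed

lemma mu_eq_of_bool_sum:
  assumes "i \<in> {1..d1}" "j \<in> {1..d2}" "k \<in> {1..d3}"
  shows "mu X A B C i j k = of_bool ((i, j) \<in> U3) + of_bool ((i, k) \<in> U2) + of_bool ((j, k) \<in> U1)"
proof -
  let ?P = "(A i, B j, C k)"
  have AB: "?P \<in> Lin (1, A i') (2, B j') \<and> (i', j') \<in> U3 \<longleftrightarrow> i' = i \<and> j' = j \<and> (i, j) \<in> U3"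
    for i' j'
    using assms U3_sub inj_on_eq_iff[OF inj_A] inj_on_eq_iff[OF inj_B]
    by (auto simp: mem_Lin coord_def)
  have AC: "?P \<in> Lin (1, A i') (3, C k') \<and> (i', k') \<in> U2 \<longleftrightarrow> i' = i \<and> k' = k \<and> (i, k) \<in> U2"
    for i' k'
    using assms U2_sub inj_on_eq_iff[OF inj_A] inj_on_eq_iff[OF inj_C]
    by (auto simp: mem_Lin coord_def)
  have BC: "?P \<in> Lin (2, B j') (3, C k') \<and> (j', k') \<in> U1 \<longleftrightarrow> j' = j \<and> k' = k \<and> (j, k) \<in> U1"
    for j' k'
    using assms U1_sub inj_on_eq_iff[OF inj_B] inj_on_eq_iff[OF inj_C]
    by (auto simp: mem_Lin coord_def)
  have "{L \<in> X. ?P \<in> L} =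
      {Lin (1, A i') (2, B j') | i' j'. ?P \<in> Lin (1, A i') (2, B j') \<and> (i', j') \<in> U3} \<union>
      {Lin (1, A i') (3, C k') | i' k'. ?P \<in> Lin (1, A i') (3, C k') \<and> (i', k') \<in> U2} \<union>
      {Lin (2, B j') (3, C k') | j' k'. ?P \<in> Lin (2, B j') (3, C k') \<and> (j', k') \<in> U1}"
    unfolding X_def lines_of_def by blast
  also have "\<dots> =
      {Lin (1, A i') (2, B j') | i' j'. i' = i \<and> j' = j \<and> (i, j) \<in> U3} \<union>
      {Lin (1, A i') (3, C k') | i' k'. i' = i \<and> k' = k \<and> (i, k) \<in> U2} \<union>
      {Lin (2, B j') (3, C k') | j' k'. j' = j \<and> k' = k \<and> (j, k) \<in> U1}"
    by (simp only: AB AC BC)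
  also have "\<dots> =
      (if (i, j) \<in> U3 then {Lin (1, A i) (2, B j)} else {}) \<union>
      (if (i, k) \<in> U2 then {Lin (1, A i) (3, C k)} else {}) \<union>
      (if (j, k) \<in> U1 then {Lin (2, B j) (3, C k)} else {})"
    by auto
  finally show ?thesis
    by (simp add: mu_def Lin_neq)
qed

lemma mu_AB_eq: "i \<in> {1..d1} \<Longrightarrow> j \<in> {1..d2} \<Longrightarrow> mu_AB X A B i j = of_bool ((i, j) \<in> U3)"
  by (simp add: mu_AB_def Lin_A_B_in_X_iff)

lemma mu_AC_eq: "i \<in> {1..d1} \<Longrightarrow> k \<in> {1..d3} \<Longrightarrow> mu_AC X A C i k = of_bool ((i, k) \<in> U2)"
  by (simp add: mu_AC_def Lin_A_C_in_X_iff)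

lemma mu_BC_eq: "j \<in> {1..d2} \<Longrightarrow> k \<in> {1..d3} \<Longrightarrow> mu_BC X B C j k = of_bool ((j, k) \<in> U1)"
  by (simp add: mu_BC_def Lin_B_C_in_X_iff)

lemma mu_pattern_AB_iff:
  assumes "a1 \<in> {1..d1}" "a2 \<in> {1..d1}" "b1 \<in> {1..d2}" "b2 \<in> {1..d2}" "c \<in> {1..d3}"
  shows "(\<not> (mu X A B C a1 b1 c = 2 \<and> mu X A B C a1 b2 c = 1 \<and>
            mu X A B C a2 b1 c = 2 \<and> mu X A B C a2 b2 c = 2)
        \<or> \<not> (mu_AB X A B a1 b1 = 1 \<and> mu_AB X A B a1 b2 = 1 \<and>
             mu_AB X A B a2 b1 = 0 \<and> mu_AB X A B a2 b2 = 1))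
    \<longleftrightarrow> \<not> induced_pentagon X (3, C c) (1, A a2) (2, B b2) (1, A a1) (2, B b1)"
  using assms
  by (auto simp: mu_eq_of_bool_sum mu_AB_eq induced_pentagon_def line_in_indexed_iff not_line_in_same_type
      is_hyperplane_def)

lemma mu_pattern_AC_iff:
  assumes "a1 \<in> {1..d1}" "a2 \<in> {1..d1}" "b \<in> {1..d2}" "c1 \<in> {1..d3}" "c2 \<in> {1..d3}"
  shows "(\<not> (mu X A B C a1 b c1 = 2 \<and> mu X A B C a1 b c2 = 1 \<and>
            mu X A B C a2 b c1 = 2 \<and> mu X A B C a2 b c2 = 2)
        \<or> \<not> (mu_AC X A C a1 c1 = 1 \<and> mu_AC X A C a1 c2 = 1 \<and>
             mu_AC X A C a2 c1 = 0 \<and> mu_AC X A C a2 c2 = 1))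
    \<longleftrightarrow> \<not> induced_pentagon X (2, B b) (1, A a2) (3, C c2) (1, A a1) (3, C c1)"
  using assms
  by (auto simp: mu_eq_of_bool_sum mu_AC_eq induced_pentagon_def line_in_indexed_iff not_line_in_same_type
      is_hyperplane_def)

lemma mu_pattern_BC_iff:
  assumes "a \<in> {1..d1}" "b1 \<in> {1..d2}" "b2 \<in> {1..d2}" "c1 \<in> {1..d3}" "c2 \<in> {1..d3}"
  shows "(\<not> (mu X A B C a b1 c1 = 2 \<and> mu X A B C a b1 c2 = 1 \<and>
            mu X A B C a b2 c1 = 2 \<and> mu X A B C a b2 c2 = 2)
        \<or> \<not> (mu_BC X B C b1 c1 = 1 \<and> mu_BC X B C b1 c2 = 1 \<and>
             mu_BC X B C b2 c1 = 0 \<and> mu_BC X B C b2 c2 = 1))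
    \<longleftrightarrow> \<not> induced_pentagon X (1, A a) (2, B b2) (3, C c2) (2, B b1) (3, C c1)"
  using assms
  by (auto simp: mu_eq_of_bool_sum mu_BC_eq induced_pentagon_def line_in_indexed_iff not_line_in_same_type
      is_hyperplane_def)

end

theorem proposition3p7:
  fixes A B C :: "nat \<Rightarrow> 'k :: {alg_closed_field, field_char_0} option"
    and d1 d2 d3 :: nat
    and U3 U2 U1 :: "(nat \<times> nat) set"
    and X :: "'k pt3 set set"
  assumes X_def: "X = lines_of A B C U3 U2 U1"
    and injA: "inj_on A {1..d1}" and injB: "inj_on B {1..d2}" and injC: "inj_on C {1..d3}"
    and U3_sub: "U3 \<subseteq> {1..d1} \<times> {1..d2}"
    and U2_sub: "U2 \<subseteq> {1..d1} \<times> {1..d3}"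
    and U1_sub: "U1 \<subseteq> {1..d2} \<times> {1..d3}"
    and A_used: "\<forall>i\<in>{1..d1}. (\<exists>j. (i, j) \<in> U3) \<or> (\<exists>k. (i, k) \<in> U2)"
    and B_used: "\<forall>j\<in>{1..d2}. (\<exists>i. (i, j) \<in> U3) \<or> (\<exists>k. (j, k) \<in> U1)"
    and C_used: "\<forall>k\<in>{1..d3}. (\<exists>i. (i, k) \<in> U2) \<or> (\<exists>j. (j, k) \<in> U1)"
    and F3: "resembles_ferrers U3 d1 d2"
    and F2: "resembles_ferrers U2 d1 d3"
    and F1: "resembles_ferrers U1 d2 d3"
  shows "Hyp5_star X \<longleftrightarrow>
    (\<forall>a1\<in>{1..d1}. \<forall>a2\<in>{1..d1}. \<forall>b1\<in>{1..d2}. \<forall>b2\<in>{1..d2}. \<forall>c1\<in>{1..d3}. \<forall>c2\<in>{1..d3}.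
       (\<not> (mu X A B C a1 b1 c1 = 2 \<and> mu X A B C a1 b2 c1 = 1 \<and>
            mu X A B C a2 b1 c1 = 2 \<and> mu X A B C a2 b2 c1 = 2)
        \<or> \<not> (mu_AB X A B a1 b1 = 1 \<and> mu_AB X A B a1 b2 = 1 \<and>
             mu_AB X A B a2 b1 = 0 \<and> mu_AB X A B a2 b2 = 1)) \<and>
       (\<not> (mu X A B C a1 b1 c1 = 2 \<and> mu X A B C a1 b1 c2 = 1 \<and>
            mu X A B C a2 b1 c1 = 2 \<and> mu X A B C a2 b1 c2 = 2)
        \<or> \<not> (mu_AC X A C a1 c1 = 1 \<and> mu_AC X A C a1 c2 = 1 \<and>
             mu_AC X A C a2 c1 = 0 \<and> mu_AC X A C a2 c2 = 1)) \<and>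
       (\<not> (mu X A B C a1 b1 c1 = 2 \<and> mu X A B C a1 b1 c2 = 1 \<and>
            mu X A B C a1 b2 c1 = 2 \<and> mu X A B C a1 b2 c2 = 2)
        \<or> \<not> (mu_BC X B C b1 c1 = 1 \<and> mu_BC X B C b1 c2 = 1 \<and>
             mu_BC X B C b2 c1 = 0 \<and> mu_BC X B C b2 c2 = 1)))"
proof -
  interpret variety_of_lines A B C d1 d2 d3 U3 U2 U1 X
    using X_def injA injB injC U3_sub U2_sub U1_sub by unfold_locales
  show ?thesis
    unfolding Hyp5_star_iff_no_indexed_pentagon
    by (simp only: mu_pattern_AB_iff mu_pattern_AC_iff mu_pattern_BC_iff cong: ball_cong)
qed

end
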